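(* Let $\mathcal{P}^{\uparrow}_+$ be the proper orthochronous Poincaré group on $\mathbb{R}^4$, i.e. the group of maps $x\mapsto Lx+b$ with $b\in\mathbb{R}^4$ and $L$ in the proper orthochronous Lorentz group of the form $g=\mathrm{diag}(1,1,1,-c^2)$. Then every $\mathcal{P}^{\uparrow}_+$-invariant equivalence relation on $\mathbb{R}^4$ is trivial, i.e. it is either the total relation $\mathbb{R}^4\times\mathbb{R}^4$ or the identity relation.
   Context: An equivalence relation $\sim$ is $\mathcal{P}^{\uparrow}_+$-invariant if $x\sim y$ implies $h(x)\sim h(y)$ for all $x,y\in\mathbb{R}^4$ and all $h\in\mathcal{P}^{\uparrow}_+$. *)

theory Defs
  imports "HOL-Analysis.Analysis"
begin

text \<open>Coordinates of R^4 are indexed by the type 4 = {0,1,2,3}; index 3 is the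
  time coordinate (the fourth one), matching g = diag(1,1,1,-c^2).\<close>

definition minkowski_metric :: "real \<Rightarrow> real^4^4" where
  "minkowski_metric c = (\<chi> i j. if i = j then (if i = (3::4) then - (c^2) else 1) else 0)"

definition lorentz_group :: "real \<Rightarrow> (real^4^4) set" where
  "lorentz_group c = {L. transpose L ** minkowski_metric c ** L = minkowski_metric c}"

definition proper_orthochronous_lorentz :: "real \<Rightarrow> (real^4^4) set" where
  "proper_orthochronous_lorentz c =
     {L \<in> lorentz_group c. det L = 1 \<and> L $ 3 $ 3 > 0}"

definition proper_orthochronous_poincare :: "real \<Rightarrow> (real^4 \<Rightarrow> real^4) set" where
  "proper_orthochronous_poincare c =
     {(\<lambda>x. L *v x + b) | L b. L \<in> proper_orthochronous_lorentz c}"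

definition poincare_invariant :: "real \<Rightarrow> ((real^4) \<times> (real^4)) set \<Rightarrow> bool" where
  "poincare_invariant c R \<longleftrightarrow>
     (\<forall>x y h. (x, y) \<in> R \<longrightarrow> h \<in> proper_orthochronous_poincare c \<longrightarrow> (h x, h y) \<in> R)"

end

theory Submission
  imports Defs
begin

text \<open>Translation invariance makes an invariant equivalence relation \<open>R\<close> the coset relation
  of the class \<open>S\<close> of the origin, an additive subgroup of \<open>\<real>\<^sup>4\<close> stable under the Lorentz group.
  If \<open>S \<noteq> {0}\<close>, half-turns in spatial coordinate planes extract from a nonzero element of \<open>S\<close> a nonzero
  multiple of a coordinate vector. Since a boost \<open>B\<^sub>p\<close> in the \<open>(a,t)\<close>-plane acts on the two axes
  by \<open>cosh p\<close> and \<open>sinh p\<close>, the differences \<open>B\<^sub>p w - B\<^sub>-\<^sub>p w\<close> carry an axis vector of that plane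
  to an arbitrary multiple of the other one; hence \<open>S\<close> contains all coordinate vectors, so
  \<open>S = \<real>\<^sup>4\<close> and \<open>R\<close> is total.\<close>

lemma prod_UNIV_4: "prod f (UNIV :: 4 set) = f 1 * f 2 * f 3 * f 4"
  unfolding UNIV_4 by (simp add: ac_simps)

lemma det_minkowski_metric_nonzero: "c \<noteq> 0 \<Longrightarrow> det (minkowski_metric c) \<noteq> 0"
  unfolding minkowski_metric_def by (subst det_diagonal) (simp_all add: prod_UNIV_4)

lemma lorentz_group_det_square:
  assumes "c \<noteq> 0" "L \<in> lorentz_group c"
  shows "det L * det L = 1"
proof -
  have "det L * det (minkowski_metric c) * det L = det (minkowski_metric c)"
    using arg_cong[where f = det, OF assms(2)[unfolded lorentz_group_def, simplified]]
    by (simp add: det_mul det_transpose)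
  then have "(det L * det L - 1) * det (minkowski_metric c) = 0"
    by (simp add: algebra_simps)
  then show ?thesis
    using det_minkowski_metric_nonzero[OF assms(1)] by simp
qed

lemma mat_1_proper_orthochronous_lorentz: "mat 1 \<in> proper_orthochronous_lorentz c"
  by (simp add: proper_orthochronous_lorentz_def lorentz_group_def transpose_mat det_I)
     (simp add: mat_def)

lemma spatial_index_cases: "a \<noteq> (3::4) \<Longrightarrow> a = 1 \<or> a = 2 \<or> a = 4"
  using exhaust_4[of a] by blast

lemma two_other_spatial_indices:
  "a \<noteq> (3::4) \<Longrightarrow> \<exists>b d :: 4. b \<noteq> 3 \<and> d \<noteq> 3 \<and> a \<noteq> b \<and> a \<noteq> d \<and> b \<noteq> d"
  by (drule spatial_index_cases)
    (elim disjE; (rule exI[of _ 2] exI[of _ 1]; rule exI[of _ 4] exI[of _ 2]; simp))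

definition diag_matrix :: "('n::finite \<Rightarrow> 'a::comm_ring_1) \<Rightarrow> 'a^'n^'n" where
  "diag_matrix d = (\<chi> i j. if i = j then d i else 0)"

lemma diag_matrix_mult_left: "diag_matrix d ** A = (\<chi> i j. d i * A $ i $ j)"
proof -
  have "(\<Sum>k\<in>UNIV. (if i = k then d i else 0) * A $ k $ j) = d i * A $ i $ j" for i j
    by (simp add: if_distrib[where f = "\<lambda>x. x * _"] cong: if_cong)
  then show ?thesis
    by (simp add: vec_eq_iff matrix_matrix_mult_def diag_matrix_def)
qed

lemma diag_matrix_mult_right: "A ** diag_matrix d = (\<chi> i j. A $ i $ j * d j)"
proof -
  have "(\<Sum>k\<in>UNIV. A $ i $ k * (if k = j then d k else 0)) = A $ i $ j * d j" for i j
    by (simp add: if_distrib[where f = "\<lambda>x. _ * x"] cong: if_cong)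
  then show ?thesis
    by (simp add: vec_eq_iff matrix_matrix_mult_def diag_matrix_def)
qed

lemma transpose_diag_matrix: "transpose (diag_matrix d) = diag_matrix d"
  by (simp add: vec_eq_iff transpose_def diag_matrix_def)

lemma diag_matrix_mult_vector: "diag_matrix d *v v = (\<chi> i. d i * v $ i)"
proof -
  have "(\<Sum>k\<in>UNIV. (if i = k then d i else 0) * v $ k) = d i * v $ i" for i
    by (simp add: if_distrib[where f = "\<lambda>x. x * _"] cong: if_cong)
  then show ?thesis
    by (simp add: vec_eq_iff matrix_vector_mult_def diag_matrix_def)
qed

lemma diag_matrix_lorentz_group:
  assumes "\<And>i. d i * d i = 1"
  shows "diag_matrix d \<in> lorentz_group c"
proof -
  have "d i * minkowski_metric c $ i $ j * d j = minkowski_metric c $ i $ j" for i j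
  proof (cases "i = j")
    case True
    then have "d i * minkowski_metric c $ i $ j * d j = (d i * d i) * minkowski_metric c $ i $ j"
      by (simp only: ac_simps)
    then show ?thesis
      using assms by simp
  qed (simp add: minkowski_metric_def)
  then show ?thesis
    by (simp add: lorentz_group_def transpose_diag_matrix diag_matrix_mult_left
        diag_matrix_mult_right vec_eq_iff)
qed

definition half_turn :: "4 \<Rightarrow> 4 \<Rightarrow> real^4^4" where
  "half_turn a b = diag_matrix (\<lambda>i. if i = a \<or> i = b then -1 else 1)"

lemma half_turn_proper_orthochronous_lorentz:
  assumes "a \<noteq> 3" "b \<noteq> 3" "a \<noteq> b"
  shows "half_turn a b \<in> proper_orthochronous_lorentz c"
proof -
  have "det (half_turn a b) = 1"
    unfolding half_turn_def diag_matrix_def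
    using spatial_index_cases[OF assms(1)] spatial_index_cases[OF assms(2)] assms(3)
    by (subst det_diagonal) (auto simp: prod_UNIV_4)
  then show ?thesis
    using assms
    by (simp add: proper_orthochronous_lorentz_def half_turn_def diag_matrix_lorentz_group)
       (simp add: diag_matrix_def)
qed

lemma diff_half_turn_mult:
  assumes "a \<noteq> b"
  shows "v - half_turn a b *v v = axis a (2 * v $ a) + axis b (2 * v $ b)"
  using assms by (auto simp: vec_eq_iff half_turn_def diag_matrix_mult_vector axis_def)

definition boost :: "real \<Rightarrow> 4 \<Rightarrow> real \<Rightarrow> real^4^4" where
  "boost c a p = (\<chi> i j. if i = j then (if i = a \<or> i = 3 then cosh p else 1)
     else if i = a \<and> j = 3 then c * sinh p else if i = 3 \<and> j = a then sinh p / c else 0)"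

lemma boost_lorentz_group:
  assumes "c > 0" "a \<noteq> 3"
  shows "boost c a p \<in> lorentz_group c"
  using spatial_index_cases[OF assms(2)] assms(1) cosh_square_eq[of p]
  unfolding lorentz_group_def
  by (auto simp: vec_eq_iff forall_4 sum_4 matrix_matrix_mult_def transpose_def
      minkowski_metric_def boost_def field_simps power2_eq_square)

lemma boost_half_mult:
  assumes "c > 0" "a \<noteq> 3"
  shows "boost c a (p / 2) ** boost c a (p / 2) = boost c a p"
  using spatial_index_cases[OF assms(2)] assms(1) sinh_double[of "p / 2"] cosh_double[of "p / 2"]
  by (auto simp: vec_eq_iff forall_4 sum_4 matrix_matrix_mult_def
      boost_def field_simps power2_eq_square)

lemma boost_proper_orthochronous_lorentz:
  assumes "c > 0" "a \<noteq> 3"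
  shows "boost c a p \<in> proper_orthochronous_lorentz c"
proof -
  have "det (boost c a p) = det (boost c a (p / 2) ** boost c a (p / 2))"
    by (simp only: boost_half_mult[OF assms])
  also have "\<dots> = det (boost c a (p / 2)) * det (boost c a (p / 2))"
    by (rule det_mul)
  also have "\<dots> = 1"
    using assms(1) by (intro lorentz_group_det_square[of c] boost_lorentz_group assms) auto
  finally show ?thesis
    using boost_lorentz_group[OF assms]
    by (simp add: proper_orthochronous_lorentz_def boost_def)
qed

lemma boost_mult_axis_space:
  assumes "a \<noteq> 3"
  shows "boost c a p *v axis a k = axis a (k * cosh p) + axis 3 (k * sinh p / c)"
  using spatial_index_cases[OF assms]
  by (auto simp: vec_eq_iff forall_4 sum_4 matrix_vector_mult_def boost_def axis_def)

lemma boost_mult_axis_time: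
  assumes "a \<noteq> 3"
  shows "boost c a p *v axis 3 k = axis a (k * c * sinh p) + axis 3 (k * cosh p)"
  using spatial_index_cases[OF assms]
  by (auto simp: vec_eq_iff forall_4 sum_4 matrix_vector_mult_def boost_def axis_def)

locale lorentz_stable_subgroup =
  fixes c :: real and S :: "(real^4) set"
  assumes c_pos: "c > 0"
    and zero_mem: "0 \<in> S"
    and diff_mem: "u \<in> S \<Longrightarrow> w \<in> S \<Longrightarrow> u - w \<in> S"
    and lorentz_mult_mem: "L \<in> proper_orthochronous_lorentz c \<Longrightarrow> w \<in> S \<Longrightarrow> L *v w \<in> S"
begin

lemma add_mem:
  assumes "u \<in> S" "w \<in> S"
  shows "u + w \<in> S"
proof -
  have "u - (0 - w) \<in> S"
    by (intro diff_mem zero_mem assms)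
  then show ?thesis by simp
qed

lemma diff_half_turn_mult_mem:
  assumes "v \<in> S" "a \<noteq> 3" "b \<noteq> 3" "a \<noteq> b"
  shows "axis a (2 * v $ a) + axis b (2 * v $ b) \<in> S"
proof -
  have "v - half_turn a b *v v \<in> S"
    by (intro diff_mem lorentz_mult_mem half_turn_proper_orthochronous_lorentz assms)
  then show ?thesis
    by (simp only: diff_half_turn_mult[OF assms(4)])
qed

lemma spatial_axis_mem:
  assumes "v \<in> S" "a \<noteq> 3"
  shows "axis a (4 * v $ a) \<in> S"
proof -
  obtain b d :: 4 where bd: "b \<noteq> 3" "d \<noteq> 3" "a \<noteq> b" "a \<noteq> d" "b \<noteq> d"
    using two_other_spatial_indices[OF assms(2)] by blast
  let ?w = "axis a (2 * v $ a) + axis b (2 * v $ b)"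
  have "axis a (2 * ?w $ a) + axis d (2 * ?w $ d) = axis a (4 * v $ a)"
    using bd by (simp add: vec_eq_iff axis_def)
  then show ?thesis
    using diff_half_turn_mult_mem[OF diff_half_turn_mult_mem[OF assms(1,2) bd(1,3)] assms(2) bd(2,4)]
    by (simp only:)
qed

lemma time_axis_mem_of_spatial:
  assumes "a \<noteq> 3" "k \<noteq> 0" "axis a k \<in> S"
  shows "axis 3 t \<in> S"
proof -
  define p where "p = arsinh (t * c / (2 * k))"
  have "boost c a p *v axis a k - boost c a (- p) *v axis a k \<in> S"
    by (intro diff_mem lorentz_mult_mem boost_proper_orthochronous_lorentz c_pos assms(1,3))
  also have "boost c a p *v axis a k - boost c a (- p) *v axis a k = axis 3 (2 * k * sinh p / c)"
    unfolding boost_mult_axis_space[OF assms(1)] by (simp add: vec_eq_iff axis_def)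
  also have "2 * k * sinh p / c = t"
    using assms(2) c_pos by (simp add: p_def field_simps)
  finally show ?thesis .
qed

lemma spatial_axis_mem_of_time:
  assumes "a \<noteq> 3" "k \<noteq> 0" "axis 3 k \<in> S"
  shows "axis a t \<in> S"
proof -
  define p where "p = arsinh (t / (2 * k * c))"
  have "boost c a p *v axis 3 k - boost c a (- p) *v axis 3 k \<in> S"
    by (intro diff_mem lorentz_mult_mem boost_proper_orthochronous_lorentz c_pos assms(1,3))
  also have "boost c a p *v axis 3 k - boost c a (- p) *v axis 3 k = axis a (2 * k * c * sinh p)"
    unfolding boost_mult_axis_time[OF assms(1)] by (simp add: vec_eq_iff axis_def)
  also have "2 * k * c * sinh p = t"
    using assms(2) c_pos by (simp add: p_def field_simps)
  finally show ?thesis .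
qed

lemma all_axes_mem:
  assumes "k \<noteq> 0" "axis i k \<in> S"
  shows "axis j t \<in> S"
proof -
  have time: "axis 3 s \<in> S" for s
  proof (cases "i = 3")
    case True
    then have "axis 1 1 \<in> S"
      using spatial_axis_mem_of_time[of 1 k] assms by simp
    then show ?thesis
      using time_axis_mem_of_spatial[of 1 1] by simp
  next
    case False
    then show ?thesis
      using time_axis_mem_of_spatial assms by blast
  qed
  show ?thesis
  proof (cases "j = 3")
    case True
    then show ?thesis using time by simp
  next
    case False
    then show ?thesis using spatial_axis_mem_of_time[of j 1] time by simp
  qed
qed

lemma eq_UNIV_if_nonzero_mem:
  assumes "v \<in> S" "v \<noteq> 0"
  shows "S = UNIV"
proof -
  obtain i k where ik: "k \<noteq> 0" "axis i k \<in> S"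
  proof (cases "\<exists>a. a \<noteq> 3 \<and> v $ a \<noteq> 0")
    case True
    then obtain a where "a \<noteq> 3" "v $ a \<noteq> 0" by blast
    then show ?thesis
      using that[of "4 * v $ a" a] spatial_axis_mem[OF assms(1)] by simp
  next
    case False
    then have "v = axis 3 (v $ 3)"
      by (auto simp: vec_eq_iff axis_def)
    then show ?thesis
      using that[of "v $ 3" 3] assms by force
  qed
  have "w \<in> S" for w
  proof -
    have "w = axis 1 (w $ 1) + axis 2 (w $ 2) + axis 3 (w $ 3) + axis 4 (w $ 4)"
      by (simp add: vec_eq_iff forall_4 axis_def)
    also have "\<dots> \<in> S"
      by (intro add_mem all_axes_mem[OF ik])
    finally show ?thesis .
  qed
  then show ?thesis by blast
qed

end

lemma translation_invariant_iff_diff_mem: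
  fixes R :: "('a::ab_group_add \<times> 'a) set"
  assumes "\<And>x y b. (x, y) \<in> R \<Longrightarrow> (x + b, y + b) \<in> R"
  shows "(x, y) \<in> R \<longleftrightarrow> y - x \<in> R `` {0}"
  using assms[of x y "- x"] assms[of 0 "y - x" x] by auto

lemma translation_invariant_equiv_class_diff_mem:
  fixes R :: "('a::ab_group_add \<times> 'a) set"
  assumes "equiv UNIV R" "\<And>x y b. (x, y) \<in> R \<Longrightarrow> (x + b, y + b) \<in> R"
    and "u \<in> R `` {0}" "w \<in> R `` {0}"
  shows "u - w \<in> R `` {0}"
proof -
  have "(w, u) \<in> R"
    using assms(1,3,4) by (meson Image_singleton_iff equiv_def symE transE)
  then show ?thesis
    using translation_invariant_iff_diff_mem[OF assms(2), of w u] by blast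
qed

lemma poincare_invariantD:
  assumes "poincare_invariant c R" "(x, y) \<in> R" "L \<in> proper_orthochronous_lorentz c"
  shows "(L *v x + b, L *v y + b) \<in> R"
  using assms unfolding poincare_invariant_def proper_orthochronous_poincare_def by blast

lemma poincare_invariant_translation:
  "poincare_invariant c R \<Longrightarrow> (x, y) \<in> R \<Longrightarrow> (x + b, y + b) \<in> R"
  using poincare_invariantD[OF _ _ mat_1_proper_orthochronous_lorentz] by simp

lemma poincare_invariant_equiv_class_zero:
  assumes "c > 0" "equiv UNIV R" "poincare_invariant c R"
  shows "lorentz_stable_subgroup c (R `` {0})"
proof
  show "0 \<in> R `` {0}"
    using assms(2) by (simp add: equiv_def refl_on_def)
  show "L *v w \<in> R `` {0}" if "L \<in> proper_orthochronous_lorentz c" "w \<in> R `` {0}" for L w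
    using poincare_invariantD[OF assms(3) _ that(1), of 0 w 0] that(2) by simp
  show "u - w \<in> R `` {0}" if "u \<in> R `` {0}" "w \<in> R `` {0}" for u w
    using translation_invariant_equiv_class_diff_mem[OF assms(2) _ that]
      poincare_invariant_translation[OF assms(3)] by blast
qed (fact assms(1))

theorem corollary3p9:
  fixes c :: real and R :: "((real^4) \<times> (real^4)) set"
  assumes "c > 0"
    and "equiv UNIV R"
    and "poincare_invariant c R"
  shows "R = UNIV \<or> R = Id"
proof (cases "R \<subseteq> Id")
  case True
  then show ?thesis
    using assms(2) by (auto simp: equiv_def refl_on_def)
next
  case False
  then obtain x y where "(x, y) \<in> R" "x \<noteq> y" by auto
  note diff_mem_iff = translation_invariant_iff_diff_mem[OF poincare_invariant_translation[OF assms(3)]]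
  have "y - x \<in> R `` {0}" "y - x \<noteq> 0"
    using diff_mem_iff[of x y] \<open>(x, y) \<in> R\<close> \<open>x \<noteq> y\<close> by auto
  then have "R `` {0} = UNIV"
    by (rule lorentz_stable_subgroup.eq_UNIV_if_nonzero_mem[OF poincare_invariant_equiv_class_zero[OF assms]])
  then have "(u, w) \<in> R" for u w
    using diff_mem_iff[of u w] by blast
  then show ?thesis by auto
qed

end
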